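(* Consider the Que Sera Consensus (QSC) protocol, as described in the context, running on $n$ nodes atop a full-spread threshold synchronous broadcast primitive $\mathrm{TSB}(t_r,t_b,n)$ with $t_r>0$ and $t_b>0$. If a consensus round starting at time-step $s$ has initial history $h_{s_i}$ on node $i$, then for every earlier consensus round, starting at a time-step $s'<s$, there exists some node $j$ whose initial history $h_{s'_j}$ in that earlier round is a strict prefix of $h_{s_i}$.
   Context: Threshold synchronous broadcast (TSB). A group of $n$ nodes, numbered $1,\dots,n$, operates in integer logical time-steps $0,1,2,\dots$. Nodes may fail only by crashing permanently. In each time-step every non-failed node calls $\mathrm{Broadcast}(m)$ exactly once; the call returns a pair $(R,B)$ of message sets. A primitive provides $\mathrm{TSB}(t_r,t_b,t_s)$ if: (lock-step synchrony) a call to $\mathrm{Broadcast}(m)$ at step $s$ returns at step $s+1$ unless the node fails before reaching step $s+1$; (receive threshold) if node $i$'s call at step $s$ returns $(R,B)$, there is $N_R\subseteq\{1,\dots,n\}$ with $|N_R|\ge t_r$ such that $R$ is exactly the set of messages broadcast by the nodes in $N_R$ during step $s$; (broadcast threshold) there is $N_B\subseteq\{1,\dots,n\}$ with $|N_B|\ge t_b$ such that $B$ is exactly the set of messages broadcast by the nodes in $N_B$ during step $s$; (spread threshold) if some node's call at step $s$ returns $(R,B)$ with $m'\in B$, then there are at least $t_s$ nodes whose receive sets $R$ returned from their step-$s$ calls include $m'$ (a node that fails before completing step $s$ counts if it would have received $m'$ had it not failed). The case $t_s=n$ is called full-spread. Histories and priorities. A proposal is a triple $\langle i,m,r\rangle$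 (node, message, numeric priority). A history is a finite list of proposals; $[]$ is the empty history and $\|$ is list concatenation. The priority of a nonempty history is the priority $r$ of its last proposal. A history $h$ is best in a set $H$ if $h\in H$ and no $h'\in H$ has strictly greater priority; $h$ is uniquely best in $H$ if $h\in H$ and no other $h'\ne h$ in $H$ has priority greater than or equal to that of $h$. QSC protocol. It is parameterized by functions ChooseMessage (returns some message, possibly empty), Deliver (passes a history to the application), RandomValue (returns a value drawn using node-private randomness from a fixed nontrivial distribution, the same on every node, with at least two values of nonzero probability), and Broadcast (the TSB primitive). Each node $i$ runs: set $h\leftarrow[]$; then forever repeat a consensus round: $m\leftarrow\mathrm{ChooseMessage}()$; $r\leftarrow\mathrm{RandomValue}()$; $h'\leftarrow h\,\|\,[\langle i,m,r\rangle]$; $(R',B')\leftarrow\mathrm{Broadcast}(h')$; $h''\leftarrow$ any best history in $B'$; $(R'',B'')\leftarrow\mathrm{Broadcast}(h'')$; $h\leftarrow$ any best history in $R''$; if $h\in B''$ and $h$ is uniquely best in $R'$, call $\mathrm{Deliver}(h)$. Each round thus occupies two time-steps; the value of $h$ at the start of a round is the node's initial history for that round, and the value of $h$ assigned from $R''$ is its resulting history for that round. *)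

theory Defs
  imports Complex_Main "HOL-Library.Sublist"
begin

text \<open>Proposals: (node, message, numeric priority). Histories: lists of proposals.\<close>
type_synonym 'm proposal = "nat \<times> 'm \<times> real"
type_synonym 'm history = "'m proposal list"

definition prio :: "'m history \<Rightarrow> real" where
  "prio h = snd (snd (last h))"

definition best :: "'m history \<Rightarrow> 'm history set \<Rightarrow> bool" where
  "best h H \<longleftrightarrow> h \<in> H \<and> (\<forall>h'\<in>H. \<not> prio h' > prio h)"

definition uniquely_best :: "'m history \<Rightarrow> 'm history set \<Rightarrow> bool" where
  "uniquely_best h H \<longleftrightarrow> h \<in> H \<and> (\<forall>h'\<in>H. h' \<noteq> h \<longrightarrow> \<not> prio h' \<ge> prio h)"

definition msgs_of :: "(nat \<Rightarrow> nat \<Rightarrow> 'a option) \<Rightarrow> nat \<Rightarrow> nat set \<Rightarrow> 'a set" where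
  "msgs_of msg s N = {m. \<exists>j\<in>N. msg s j = Some m}"

text \<open>An execution of a broadcast primitive over n nodes providing TSB(tr,tb,ts).
  alive s i: node i has not failed before (i.e. has reached) step s.
  msg s i: message broadcast by node i at step s (None if it did not call Broadcast).
  ret s i: Some (R,B) iff node i's step-s call returned (at step s+1).
  Rv s j: the receive set node j's step-s call returns, or would have returned had
  j not failed (used for the spread threshold).\<close>
definition TSB ::
  "nat \<Rightarrow> nat \<Rightarrow> nat \<Rightarrow> nat \<Rightarrow> (nat \<Rightarrow> nat \<Rightarrow> bool) \<Rightarrow> (nat \<Rightarrow> nat \<Rightarrow> 'a option)
   \<Rightarrow> (nat \<Rightarrow> nat \<Rightarrow> ('a set \<times> 'a set) option) \<Rightarrow> (nat \<Rightarrow> nat \<Rightarrow> 'a set) \<Rightarrow> bool" where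
  "TSB n tr tb ts alive msg ret Rv \<longleftrightarrow>
     \<comment> \<open>nodes are 1..n; crashes are permanent\<close>
     (\<forall>s i. alive s i \<longrightarrow> i \<in> {1..n}) \<and>
     (\<forall>s i. alive (Suc s) i \<longrightarrow> alive s i) \<and>
     \<comment> \<open>every non-failed node calls Broadcast exactly once per step\<close>
     (\<forall>s i. msg s i \<noteq> None \<longleftrightarrow> alive s i) \<and>
     \<comment> \<open>lock-step synchrony\<close>
     (\<forall>s i. ret s i \<noteq> None \<longleftrightarrow> (msg s i \<noteq> None \<and> alive (Suc s) i)) \<and>
     \<comment> \<open>receive threshold\<close>
     (\<forall>s i R B. ret s i = Some (R, B) \<longrightarrow> R = Rv s i \<and>
        (\<exists>N \<subseteq> {1..n}. card N \<ge> tr \<and> (\<forall>j\<in>N. msg s j \<noteq> None) \<and> R = msgs_of msg s N)) \<and>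
     \<comment> \<open>broadcast threshold\<close>
     (\<forall>s i R B. ret s i = Some (R, B) \<longrightarrow>
        (\<exists>N \<subseteq> {1..n}. card N \<ge> tb \<and> (\<forall>j\<in>N. msg s j \<noteq> None) \<and> B = msgs_of msg s N)) \<and>
     \<comment> \<open>spread threshold\<close>
     (\<forall>s i R B m. ret s i = Some (R, B) \<longrightarrow> m \<in> B \<longrightarrow>
        card {j \<in> {1..n}. m \<in> Rv s j} \<ge> ts)"

text \<open>Consensus round k occupies steps 2k and 2k+1;
  H k i is node i's initial history for round k (meaningful when alive (2k) i).
  The message and priority of each proposal are arbitrary (any ChooseMessage / RandomValue
  outcome); Deliver has no effect on the state and is omitted.\<close>
definition QSC ::
  "(nat \<Rightarrow> nat \<Rightarrow> bool) \<Rightarrow> (nat \<Rightarrow> nat \<Rightarrow> 'm history option)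
   \<Rightarrow> (nat \<Rightarrow> nat \<Rightarrow> ('m history set \<times> 'm history set) option)
   \<Rightarrow> (nat \<Rightarrow> nat \<Rightarrow> 'm history) \<Rightarrow> bool" where
  "QSC alive msg ret H \<longleftrightarrow>
     (\<forall>i. H 0 i = []) \<and>
     (\<forall>k i. alive (2*k) i \<longrightarrow> (\<exists>m r. msg (2*k) i = Some (H k i @ [(i, m, r)]))) \<and>
     (\<forall>k i R' B'. ret (2*k) i = Some (R', B') \<longrightarrow> alive (2*k+1) i \<longrightarrow>
        (\<exists>h''. best h'' B' \<and> msg (2*k+1) i = Some h'')) \<and>
     (\<forall>k i R'' B''. ret (2*k+1) i = Some (R'', B'') \<longrightarrow> best (H (Suc k) i) R'')"

end

theory Submission
  imports Defs
begin

text \<open>Follow the resulting history of node i in round k-1 backwards: it is the best history of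
  a receive set, hence was broadcast in the second step by some node j; that node broadcast the
  best history of its broadcast set, which was proposed in the first step by some node l, and
  proposals are one-element extensions of the proposer's initial history. So every initial
  history of round k strictly extends an initial history of round k-1, and induction on k
  finishes the argument.\<close>

lemma TSB_msg_iff_alive:
  assumes "TSB n tr tb ts alive msg ret Rv"
  shows "msg s i \<noteq> None \<longleftrightarrow> alive s i"
  using assms unfolding TSB_def by (elim conjE) meson

lemma TSB_returns_if_alive_Suc:
  assumes "TSB n tr tb ts alive msg ret Rv" and "alive (Suc s) i"
  obtains R B where "ret s i = Some (R, B)"
proof -
  have "ret s i \<noteq> None"
    using assms unfolding TSB_def by (elim conjE) meson
  then show thesis
    using that by auto
qed

lemma TSB_returned_was_sent:
  assumes T: "TSB n tr tb ts alive msg ret Rv"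
    and "ret s i = Some (R, B)" and "h \<in> R \<union> B"
  obtains j where "alive s j" and "msg s j = Some h"
proof -
  obtain N where "R = msgs_of msg s N"
    using assms(1,2) unfolding TSB_def by (elim conjE) meson
  moreover obtain N' where "B = msgs_of msg s N'"
    using assms(1,2) unfolding TSB_def by (elim conjE) meson
  ultimately obtain j where "msg s j = Some h"
    using assms(3) unfolding msgs_of_def by auto
  then show thesis
    using that TSB_msg_iff_alive[OF T] by blast
qed

lemma QSC_proposal:
  assumes "QSC alive msg ret H" and "alive (2*k) i"
  obtains m r where "msg (2*k) i = Some (H k i @ [(i, m, r)])"
  using assms unfolding QSC_def by (elim conjE) meson

lemma QSC_second_broadcast_in_broadcast_set:
  assumes "QSC alive msg ret H" and "ret (2*k) i = Some (R, B)" and "alive (2*k+1) i"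
    and "msg (2*k+1) i = Some h"
  shows "h \<in> B"
proof -
  obtain h' where "best h' B" and "msg (2*k+1) i = Some h'"
    using assms(1-3) unfolding QSC_def by (elim conjE) meson
  then show ?thesis
    using assms(4) unfolding best_def by simp
qed

lemma QSC_next_history_in_receive_set:
  assumes "QSC alive msg ret H" and "ret (2*k+1) i = Some (R, B)"
  shows "H (Suc k) i \<in> R"
proof -
  have "best (H (Suc k) i) R"
    using assms unfolding QSC_def by (elim conjE) meson
  then show ?thesis
    unfolding best_def by simp
qed

lemma QSC_history_extends_previous_round:
  assumes T: "TSB n tr tb ts alive msg ret Rv" and Q: "QSC alive msg ret H"
    and "alive (2 * Suc k) i"
  obtains l where "alive (2*k) l" and "strict_prefix (H k l) (H (Suc k) i)"
proof -
  obtain R'' B'' where ret_i: "ret (2*k+1) i = Some (R'', B'')"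
    using TSB_returns_if_alive_Suc[OF T, of "2*k+1" i] assms(3) by auto
  have "H (Suc k) i \<in> R'' \<union> B''"
    using QSC_next_history_in_receive_set[OF Q ret_i] by simp
  then obtain j where j: "alive (2*k+1) j" "msg (2*k+1) j = Some (H (Suc k) i)"
    by (rule TSB_returned_was_sent[OF T ret_i])
  obtain R' B' where ret_j: "ret (2*k) j = Some (R', B')"
    using TSB_returns_if_alive_Suc[OF T, of "2*k" j] j(1) by auto
  have "H (Suc k) i \<in> R' \<union> B'"
    using QSC_second_broadcast_in_broadcast_set[OF Q ret_j j] by simp
  then obtain l where l: "alive (2*k) l" "msg (2*k) l = Some (H (Suc k) i)"
    by (rule TSB_returned_was_sent[OF T ret_j])
  then obtain m r where "H (Suc k) i = H k l @ [(l, m, r)]"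
    using QSC_proposal[OF Q l(1)] by auto
  then show thesis
    using that l(1) by (simp add: strict_prefix_def)
qed

theorem lemma2:
  fixes n tr tb :: nat
    and alive :: "nat \<Rightarrow> nat \<Rightarrow> bool"
    and msg :: "nat \<Rightarrow> nat \<Rightarrow> 'm history option"
    and ret :: "nat \<Rightarrow> nat \<Rightarrow> ('m history set \<times> 'm history set) option"
    and Rv :: "nat \<Rightarrow> nat \<Rightarrow> 'm history set"
    and H :: "nat \<Rightarrow> nat \<Rightarrow> 'm history"
  assumes "tr > 0" and "tb > 0"
    and "TSB n tr tb n alive msg ret Rv"
    and "QSC alive msg ret H"
    and "alive (2*k) i"
    and "k' < k"
  shows "\<exists>j. alive (2*k') j \<and> strict_prefix (H k' j) (H k i)"
  using assms(5,6)
proof (induction k arbitrary: i)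
  case 0
  then show ?case by simp
next
  case (Suc k)
  obtain l where l: "alive (2*k) l" "strict_prefix (H k l) (H (Suc k) i)"
    using QSC_history_extends_previous_round[OF assms(3,4) Suc.prems(1)] .
  show ?case
  proof (cases "k' = k")
    case True
    then show ?thesis using l by blast
  next
    case False
    then obtain j where "alive (2*k') j" "strict_prefix (H k' j) (H k l)"
      using Suc.IH[OF l(1)] Suc.prems(2) by auto
    then show ?thesis
      using l(2) prefix_order.less_trans by blast
  qed
qed

end
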